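(* In the Mahi-Mahi protocol with wave length $w=5$, in the asynchronous network model, the Validity property of Byzantine Atomic Broadcast holds: if an honest validator $v_k$ calls $\mathrm{bcast}_k(m,q)$, then every honest validator $v_i$ eventually outputs $\mathrm{deliver}_i(m,q,v_k)$, with probability $1$.
   Context: Model: $n=3f+1$ validators, up to $f$ Byzantine (arbitrary behaviour, computationally bounded adversary), the rest honest; asynchronous network where messages between honest validators are eventually delivered with arbitrary delay (the adversary controls the schedule). Validators broadcast via $\mathrm{bcast}_k(m,q)$ and output $\mathrm{deliver}_i(m,q,v_k)$; in Mahi-Mahi the broadcast messages are the blocks honest validators create. Protocol (Mahi-Mahi). Rounds $1,2,\dots$; each honest validator creates and broadcasts exactly one block per round; Byzantine validators may create several or none. A block has an author, a round $r$, transactions, parents (hashes of distinct valid blocks of earlier rounds, including at least $2f+1$ of round $r-1$) and a share of a global perfect coin (any $2f+1$ shares reconstruct a uniformly random, unpredictable value). Each validator keeps a local DAG of valid blocks, adding a block once it holds its causal history (transitive closure of parents, including itself); honest validators reference blocks in their local DAG and fetch missing referenced blocks from the sender. Path from $b$ to $b'$: $b'$ is reached from $b$ along parent references. Vote: a block $b$ of round $r'$ votes for a block $L$ of round $r<r'$ with author $a$ if the first block of author $a$ and round $r$ met in the deterministic depth-first search from $b$ is $L$. With $w=5$: for proposal round $r$, vote round $r+3$, certify round $r+4$; a block $c$ of round $r+4$ is a certificate for $L$ of round $r$ if at least $2f+1$ of its parents are votes for $L$. Leader slots of round $r$: the coin of round $r+4$ selects uniformly at random an ordered list of $\ell$ distinct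 validators ($1\le\ell\le 3f+1$); slots ordered by round then coin order. Classification of each slot (commit of a block / skip / undecided), highest slot first: direct rule — for a block $L$ in the slot, $2f+1$ round-$(r+3)$ blocks that are not votes for $L$ give skip, $2f+1$ round-$(r+4)$ certificates for $L$ give commit of $L$; otherwise indirect rule — the anchor is the first slot of round $>r+4$ not skipped; if it is committed with block $A$, commit $L$ if $A$ has a path to a certificate for some block $L$ of the slot, else skip; if the anchor is undecided, the slot is undecided. Delivery: in slot order, up to the first undecided slot, for each committed leader block deliver deterministically all not-yet-delivered blocks of its causal history. *)

theory Defs
  imports "HOL-Probability.Probability"
begin

text \<open>Validators are the naturals below n = 3f+1. A block carries its author, its round,
  its payload (the broadcast message) and the ordered list of its parents. Blocks are
  identified with their full contents (collision-free hashing); the causal history of a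
  block is finite by construction.\<close>

datatype 'm blk = Blk (auth: nat) (rnd: nat) (payload: 'm) (pars: "'m blk list")

fun dfs :: "'m blk \<Rightarrow> 'm blk list" where
  "dfs (Blk a r m ps) = Blk a r m ps # concat (map dfs ps)"

definition hist :: "'m blk \<Rightarrow> 'm blk set" where
  "hist b = set (dfs b)"

definition authors_at :: "'m blk set \<Rightarrow> nat \<Rightarrow> nat set" where
  "authors_at S r = auth ` {b \<in> S. rnd b = r}"

definition quorum :: "nat \<Rightarrow> 'm blk set \<Rightarrow> nat \<Rightarrow> bool" where
  "quorum f S r \<longleftrightarrow> 2 * f + 1 \<le> card (authors_at S r)"

definition wf_block :: "nat \<Rightarrow> 'm blk \<Rightarrow> bool" where
  "wf_block f b \<longleftrightarrow> auth b < 3 * f + 1 \<and> 1 \<le> rnd b \<and> distinct (pars b)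
     \<and> (\<forall>p \<in> set (pars b). rnd p < rnd b)
     \<and> (1 < rnd b \<longrightarrow> quorum f (set (pars b)) (rnd b - 1))"

definition valid :: "nat \<Rightarrow> 'm blk \<Rightarrow> bool" where
  "valid f b \<longleftrightarrow> (\<forall>x \<in> hist b. wf_block f x)"

definition votes :: "'m blk \<Rightarrow> 'm blk \<Rightarrow> bool" where
  "votes b L \<longleftrightarrow> rnd L < rnd b \<and>
     find (\<lambda>x. auth x = auth L \<and> rnd x = rnd L) (dfs b) = Some L"

definition cert :: "nat \<Rightarrow> 'm blk \<Rightarrow> 'm blk \<Rightarrow> bool" where
  "cert f c L \<longleftrightarrow> rnd c = rnd L + 4 \<and>
     2 * f + 1 \<le> card (auth ` {p \<in> set (pars c). rnd p = rnd L + 3 \<and> votes p L})"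

text \<open>coin r = ordered list of leaders of round r (value of the coin of round r+4).\<close>
definition in_slot :: "(nat \<Rightarrow> nat list) \<Rightarrow> nat \<Rightarrow> nat \<Rightarrow> 'm blk \<Rightarrow> bool" where
  "in_slot coin r j L \<longleftrightarrow> auth L = coin r ! j \<and> rnd L = r"

definition known :: "nat \<Rightarrow> 'm blk set \<Rightarrow> nat \<Rightarrow> bool" where
  "known f D r \<longleftrightarrow> quorum f D (r + 4)"

definition direct_commit :: "nat \<Rightarrow> (nat \<Rightarrow> nat list) \<Rightarrow> 'm blk set \<Rightarrow> nat \<Rightarrow> nat \<Rightarrow> 'm blk \<Rightarrow> bool" where
  "direct_commit f coin D r j L \<longleftrightarrow> L \<in> D \<and> in_slot coin r j L \<and>
     2 * f + 1 \<le> card (auth ` {c \<in> D. cert f c L})"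

definition direct_skip :: "nat \<Rightarrow> (nat \<Rightarrow> nat list) \<Rightarrow> 'm blk set \<Rightarrow> nat \<Rightarrow> nat \<Rightarrow> bool" where
  "direct_skip f coin D r j \<longleftrightarrow>
     2 * f + 1 \<le> card (auth ` {b \<in> D. rnd b = r + 3 \<and> \<not> (\<exists>L. in_slot coin r j L \<and> votes b L)})"

datatype 'm status = Commit "'m blk" | Skip | Undecided

text \<open>Slot (r, j) with j < l is encoded as the index r * l + j (slot order = index order).
  The classification is computed with a fuel argument bounding the depth of the
  indirect-rule recursion (highest slots are classified first).\<close>
primrec stat :: "nat \<Rightarrow> nat \<Rightarrow> (nat \<Rightarrow> nat list) \<Rightarrow> 'm blk set \<Rightarrow> nat \<Rightarrow> nat \<Rightarrow> nat \<Rightarrow> 'm status" where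
  "stat f l coin D 0 r j = Undecided"
| "stat f l coin D (Suc k) r j =
    (if \<not> known f D r then Undecided
     else if (\<exists>L. direct_commit f coin D r j L) then Commit (SOME L. direct_commit f coin D r j L)
     else if direct_skip f coin D r j then Skip
     else (let a = (LEAST s. (r + 5) * l \<le> s \<and> stat f l coin D k (s div l) (s mod l) \<noteq> Skip) in
           case stat f l coin D k (a div l) (a mod l) of
             Commit A \<Rightarrow>
               (if \<exists>c L. c \<in> hist A \<and> in_slot coin r j L \<and> cert f c L
                then Commit (SOME L. in_slot coin r j L \<and> (\<exists>c. c \<in> hist A \<and> cert f c L))
                else Skip)
           | _ \<Rightarrow> Undecided))"

definition status :: "nat \<Rightarrow> nat \<Rightarrow> (nat \<Rightarrow> nat list) \<Rightarrow> 'm blk set \<Rightarrow> nat \<Rightarrow> nat \<Rightarrow> 'm status" where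
  "status f l coin D r j = stat f l coin D (Suc (Max (insert 0 (rnd ` D)))) r j"

definition delivered :: "nat \<Rightarrow> nat \<Rightarrow> (nat \<Rightarrow> nat list) \<Rightarrow> 'm blk set \<Rightarrow> 'm blk set" where
  "delivered f l coin D =
    (let u = (LEAST s. l \<le> s \<and> status f l coin D (s div l) (s mod l) = Undecided) in
     \<Union> {hist L | L s. l \<le> s \<and> s < u \<and> status f l coin D (s div l) (s mod l) = Commit L})"

text \<open>An execution (discrete global time): dag i t is the local DAG of validator i at time t;
  hblk i r is the block honest validator i creates in round r and htime i r the time at
  which it does so (None if never).\<close>
record 'm exec =
  dag :: "nat \<Rightarrow> nat \<Rightarrow> 'm blk set"
  hblk :: "nat \<Rightarrow> nat \<Rightarrow> 'm blk"
  htime :: "nat \<Rightarrow> nat \<Rightarrow> nat option"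

definition honest :: "nat \<Rightarrow> nat set \<Rightarrow> nat \<Rightarrow> bool" where
  "honest f Byz i \<longleftrightarrow> i < 3 * f + 1 \<and> i \<notin> Byz"

definition honest_parents :: "'m exec \<Rightarrow> nat \<Rightarrow> nat \<Rightarrow> 'm blk set \<Rightarrow> 'm blk set" where
  "honest_parents E i r D = {b \<in> D. rnd b < r \<and>
      (1 < r \<longrightarrow> b = hblk E i (r - 1) \<or> b \<notin> hist (hblk E i (r - 1)))}"

definition admissible :: "nat \<Rightarrow> nat set \<Rightarrow> 'm exec \<Rightarrow> bool" where
  "admissible f Byz E \<longleftrightarrow> (\<forall>i. honest f Byz i \<longrightarrow>
     dag E i 0 = {}
   \<and> (\<forall>t. finite (dag E i t) \<and> dag E i t \<subseteq> dag E i (Suc t))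
   \<and> (\<forall>t b. b \<in> dag E i t \<longrightarrow> valid f b \<and> set (pars b) \<subseteq> dag E i t)
   \<and> (\<forall>t b. b \<in> dag E i t \<longrightarrow> honest f Byz (auth b) \<longrightarrow>
        (\<exists>r \<tau>. htime E (auth b) r = Some \<tau> \<and> \<tau> \<le> t \<and> b = hblk E (auth b) r))
   \<and> (\<forall>r \<tau>. htime E i r = Some \<tau> \<longrightarrow>
        (\<exists>t. \<tau> = Suc t \<and> 1 \<le> r
           \<and> (1 < r \<longrightarrow> (\<exists>\<tau>'. htime E i (r - 1) = Some \<tau>' \<and> \<tau>' \<le> t) \<and> quorum f (dag E i t) (r - 1))
           \<and> auth (hblk E i r) = i \<and> rnd (hblk E i r) = r \<and> distinct (pars (hblk E i r))
           \<and> set (pars (hblk E i r)) = honest_parents E i r (dag E i t)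
           \<and> hblk E i r \<in> dag E i \<tau>))
   \<and> htime E i 1 \<noteq> None
   \<and> (\<forall>r t. 1 \<le> r \<and> htime E i r \<noteq> None \<and> quorum f (dag E i t) r \<longrightarrow> htime E i (Suc r) \<noteq> None)
   \<and> (\<forall>j r. honest f Byz j \<longrightarrow> htime E j r \<noteq> None \<longrightarrow> (\<exists>t. hblk E j r \<in> dag E i t)))"

definition agree_upto :: "nat \<Rightarrow> nat set \<Rightarrow> 'm exec \<Rightarrow> 'm exec \<Rightarrow> nat \<Rightarrow> bool" where
  "agree_upto f Byz E E' t \<longleftrightarrow>
     (\<forall>i \<tau>. honest f Byz i \<longrightarrow> \<tau> \<le> t \<longrightarrow> dag E i \<tau> = dag E' i \<tau>)
   \<and> (\<forall>i r \<tau>. honest f Byz i \<longrightarrow> \<tau> \<le> t \<longrightarrow> (htime E i r = Some \<tau>) = (htime E' i r = Some \<tau>))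
   \<and> (\<forall>i r \<tau>. honest f Byz i \<longrightarrow> \<tau> \<le> t \<longrightarrow> htime E i r = Some \<tau> \<longrightarrow> hblk E i r = hblk E' i r)"

text \<open>The leaders of round r (coin of round r+4) become known to the adversary once at least
  f+1 honest validators have published their round-(r+4) blocks (with the f Byzantine shares
  this gives 2f+1 shares).\<close>
definition revealed :: "nat \<Rightarrow> nat set \<Rightarrow> 'm exec \<Rightarrow> nat \<Rightarrow> nat \<Rightarrow> bool" where
  "revealed f Byz E t r \<longleftrightarrow>
     f + 1 \<le> card {i. honest f Byz i \<and> (\<exists>\<tau>\<le>t. htime E i (r + 4) = Some \<tau>)}"

text \<open>A (deterministic, adaptive) adversary is a map from coin outcomes to executions that
  does not anticipate unrevealed coins: the steps up to time t+1 depend only on the coin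
  values revealed at time t.\<close>
definition non_anticipating :: "nat \<Rightarrow> nat set \<Rightarrow> ((nat \<Rightarrow> nat list) \<Rightarrow> 'm exec) \<Rightarrow> bool" where
  "non_anticipating f Byz Adv \<longleftrightarrow> (\<forall>\<omega> \<omega>' t.
     (\<forall>r. revealed f Byz (Adv \<omega>) t r \<longrightarrow> \<omega> r = \<omega>' r) \<longrightarrow> agree_upto f Byz (Adv \<omega>) (Adv \<omega>') (Suc t))"

definition leader_lists :: "nat \<Rightarrow> nat \<Rightarrow> nat list set" where
  "leader_lists f l = {xs. length xs = l \<and> distinct xs \<and> set xs \<subseteq> {..<3 * f + 1}}"

definition coin_space :: "nat \<Rightarrow> nat \<Rightarrow> (nat \<Rightarrow> nat list) measure" where
  "coin_space f l = PiM UNIV (\<lambda>_::nat. measure_pmf (pmf_of_set (leader_lists f l)))"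

end

theory Submission
  imports Defs
begin

(* Call an honest validator a well-referenced leader of round r if its round-r block lies in the
   history of f+1 honest round-(r+2) blocks. By quorum intersection every round-(r+3) block then
   votes for it, every honest round-(r+4) block certifies it, and every honest validator
   eventually commits it directly. A double-counting (common core) argument shows that, before
   the coin choosing the leaders of round r is revealed, some honest validator already has this
   property, and this set of candidates does not depend on that coin. Hence each first leader is
   well referenced with probability at least 1/|leader lists|, independently of the past, so
   almost surely five consecutive rounds with well-referenced first leaders occur infinitely
   often. Five directly committed rounds decide every earlier slot, so the causal history of the
   first of these leaders is delivered; and every honest block eventually lies in the history of
   all later honest blocks. *)

lemma hist_eq: "hist b = insert b (\<Union>p\<in>set (pars b). hist p)"
  by (cases b) (auto simp: hist_def)

lemma hist_self [simp]: "b \<in> hist b"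
  by (subst hist_eq) simp

lemma hist_subset_of_parent: "p \<in> set (pars b) \<Longrightarrow> hist p \<subseteq> hist b"
  by (subst (2) hist_eq) auto

lemma parent_in_hist: "p \<in> set (pars b) \<Longrightarrow> p \<in> hist b"
  using hist_subset_of_parent hist_self by blast

lemma hist_subset_of_parent_closed:
  assumes "\<forall>x\<in>D. set (pars x) \<subseteq> D" and "b \<in> D"
  shows "hist b \<subseteq> D"
  using assms(2)
proof (induction b)
  case (Blk a r m ps)
  then have "hist p \<subseteq> D" if "p \<in> set ps" for p
    using that assms(1) by fastforce
  then show ?case
    using Blk.prems by (subst hist_eq) auto
qed

lemma votes_if_unique_in_hist:
  assumes "L \<in> hist b" and "rnd L < rnd b"
    and "\<And>x. x \<in> hist b \<Longrightarrow> auth x = auth L \<Longrightarrow> rnd x = rnd L \<Longrightarrow> x = L"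
  shows "votes b L"
proof -
  let ?P = "\<lambda>x. auth x = auth L \<and> rnd x = rnd L"
  have "find ?P (dfs b) \<noteq> None"
    using assms(1) by (auto simp: hist_def find_None_iff)
  then obtain y where y: "find ?P (dfs b) = Some y"
    by blast
  then have "y = L"
    using assms(3) by (auto simp: hist_def find_Some_iff)
  with y assms(2) show ?thesis
    by (simp add: votes_def)
qed

lemma valid_wf_block: "valid f b \<Longrightarrow> wf_block f b"
  using hist_self valid_def by blast

lemma authors_at_parents_subset:
  assumes "valid f b"
  shows "authors_at (set (pars b)) r \<subseteq> {..<3*f+1}"
proof
  fix a assume "a \<in> authors_at (set (pars b)) r"
  then obtain p where "p \<in> set (pars b)" "auth p = a"
    by (auto simp: authors_at_def)
  then have "p \<in> hist b" "auth p = a"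
    using parent_in_hist by blast+
  with assms show "a \<in> {..<3*f+1}"
    by (auto simp: valid_def wf_block_def)
qed

lemma quorum_of_parents:
  assumes "valid f b" and "1 < rnd b"
  shows "2*f+1 \<le> card (authors_at (set (pars b)) (rnd b - 1))"
  using valid_wf_block[OF assms(1)] assms(2) by (simp add: wf_block_def quorum_def)

lemma quorum_intersection:
  assumes "A \<subseteq> {..<3*f+1}" "X \<subseteq> {..<3*f+1}" "2*f+1 \<le> card A" "f+1 \<le> card X"
  shows "A \<inter> X \<noteq> {}"
proof
  assume "A \<inter> X = {}"
  then have "card A \<le> card ({..<3*f+1} - X)"
    using assms(1) by (intro card_mono) auto
  also have "\<dots> = 3*f+1 - card X"
    using assms(2) by (simp add: card_Diff_subset finite_subset)
  finally show False
    using assms(3,4) by simp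
qed

section \<open>The commit rule\<close>

lemma stat_Suc_direct_commit:
  assumes "known f D r" and "direct_commit f coin D r j L"
  shows "\<exists>A. stat f l coin D (Suc k) r j = Commit A"
  using assms by auto

lemma stat_Suc_decided:
  assumes "known f D r" and "(r+5)*l \<le> s" and "stat f l coin D k (s div l) (s mod l) = Commit A"
    and "\<And>s'. (r+5)*l \<le> s' \<Longrightarrow> s' < s \<Longrightarrow> stat f l coin D k (s' div l) (s' mod l) \<noteq> Undecided"
  shows "stat f l coin D (Suc k) r j \<noteq> Undecided"
proof (cases "(\<exists>L. direct_commit f coin D r j L) \<or> direct_skip f coin D r j")
  case False
  define Q where "Q s' \<longleftrightarrow> (r+5)*l \<le> s' \<and> stat f l coin D k (s' div l) (s' mod l) \<noteq> Skip" for s'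
  define a where "a = (LEAST s'. Q s')"
  have "Q s"
    using assms(2,3) by (simp add: Q_def)
  then have "Q a" and "a \<le> s"
    unfolding a_def by (auto intro: LeastI Least_le)
  with assms(3,4) obtain A' where "stat f l coin D k (a div l) (a mod l) = Commit A'"
    by (cases "stat f l coin D k (a div l) (a mod l)") (auto simp: Q_def le_less)
  with False assms(1) show ?thesis
    by (simp add: Let_def flip: a_def Q_def)
qed (use assms(1) in auto)

text \<open>The indirect rule looks for its anchor from round r+5 on, so five consecutive directly
  committed rounds leave no earlier slot undecided.\<close>
lemma stat_decided:
  assumes "1 \<le> l" and known: "\<forall>\<rho>\<le>R+5. known f D \<rho>"
    and commits: "\<forall>i\<in>{1..5}. \<exists>L. direct_commit f coin D (R+i) 0 L"
    and "r \<le> R" and "R + 2 - r \<le> k"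
  shows "stat f l coin D k r j \<noteq> Undecided"
  using assms(4,5)
proof (induction "R - r" arbitrary: r j k rule: less_induct)
  case less
  obtain k' where k': "k = Suc k'" "R + 1 - r \<le> k'"
    using less.prems by (cases k) auto
  define \<rho>\<^sub>0 where "\<rho>\<^sub>0 = max (R+1) (r+5)"
  have \<rho>\<^sub>0: "R+1 \<le> \<rho>\<^sub>0" "\<rho>\<^sub>0 \<le> R+5" "r+5 \<le> \<rho>\<^sub>0"
    using less.prems by (auto simp: \<rho>\<^sub>0_def)
  have "\<exists>L. direct_commit f coin D \<rho>\<^sub>0 0 L"
  proof -
    have "\<rho>\<^sub>0 - R \<in> {1..5}" "\<rho>\<^sub>0 = R + (\<rho>\<^sub>0 - R)"
      using \<rho>\<^sub>0 by auto
    then show ?thesis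
      using commits by metis
  qed
  moreover obtain k'' where "k' = Suc k''"
    using k' less.prems by (cases k') auto
  ultimately obtain A where "stat f l coin D k' ((\<rho>\<^sub>0 * l) div l) ((\<rho>\<^sub>0 * l) mod l) = Commit A"
    using stat_Suc_direct_commit known \<rho>\<^sub>0(2) assms(1) by auto
  then show ?case
    unfolding k'(1)
  proof (rule stat_Suc_decided[rotated 2])
    show "known f D r" "(r+5)*l \<le> \<rho>\<^sub>0 * l"
      using known less.prems \<rho>\<^sub>0 by auto
    fix s' assume s': "(r+5)*l \<le> s'" "s' < \<rho>\<^sub>0 * l"
    then have "r + 5 \<le> s' div l" "s' div l < \<rho>\<^sub>0"
      using assms(1) by (auto simp: less_mult_imp_div_less less_eq_div_iff_mult_less_eq)
    then have "s' div l \<le> R"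
      by (auto simp: \<rho>\<^sub>0_def)
    with \<open>r + 5 \<le> s' div l\<close> less.hyps k'(2) show "stat f l coin D k' (s' div l) (s' mod l) \<noteq> Undecided"
      by simp
  qed
qed

lemma not_known_beyond_max_rnd:
  assumes "finite D" and "Max (insert 0 (rnd ` D)) < r"
  shows "\<not> known f D r"
proof -
  have "rnd b < r + 4" if "b \<in> D" for b
  proof -
    have "rnd b \<le> Max (insert 0 (rnd ` D))"
      using assms(1) that by (intro Max_ge) auto
    with assms(2) show ?thesis
      by simp
  qed
  then have "authors_at D (r+4) = {}"
    by (fastforce simp: authors_at_def)
  then show ?thesis
    by (simp add: known_def quorum_def)
qed

lemma hist_subset_delivered:
  assumes "1 \<le> l" and "finite D" and known: "\<forall>\<rho>\<le>R+5. known f D \<rho>"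
    and commits: "\<forall>i\<in>{1..5}. \<exists>L. direct_commit f coin D (R+i) 0 L"
    and "R + 1 \<le> Max (insert 0 (rnd ` D))"
  shows "\<exists>L. direct_commit f coin D (R+1) 0 L \<and> hist L \<subseteq> delivered f l coin D"
proof -
  define M where "M = Max (insert 0 (rnd ` D))"
  define L where "L = (SOME L. direct_commit f coin D (R+1) 0 L)"
  have "\<exists>L. direct_commit f coin D (R+1) 0 L"
    using bspec[OF commits, of 1] by simp
  then have L: "direct_commit f coin D (R+1) 0 L"
    unfolding L_def by (rule someI_ex)
  have "status f l coin D (R+1) 0 = Commit L"
    using known \<open>\<exists>L. direct_commit f coin D (R+1) 0 L\<close> by (simp add: status_def L_def)
  then have commit: "status f l coin D (((R+1)*l) div l) (((R+1)*l) mod l) = Commit L"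
    using assms(1) by simp
  define u where "u = (LEAST s. l \<le> s \<and> status f l coin D (s div l) (s mod l) = Undecided)"
  have "\<not> known f D (M+1)"
    using not_known_beyond_max_rnd[OF assms(2)] by (simp add: M_def)
  then have "status f l coin D (M+1) 0 = Undecided"
    by (simp add: status_def M_def)
  then have "l \<le> (M+1)*l \<and> status f l coin D (((M+1)*l) div l) (((M+1)*l) mod l) = Undecided"
    using assms(1) by simp
  then have "l \<le> u \<and> status f l coin D (u div l) (u mod l) = Undecided"
    unfolding u_def by (rule LeastI)
  moreover have "status f l coin D (s div l) (s mod l) \<noteq> Undecided" if "s < (R+1)*l" for s
  proof -
    have "s div l \<le> R"
      using less_mult_imp_div_less[OF that] by simp
    then show ?thesis
      unfolding status_def using assms(5) by (intro stat_decided[OF assms(1) known commits]) auto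
  qed
  ultimately have "(R+1)*l < u"
    using commit by (metis linorder_neqE_nat status.distinct(3))
  moreover have "l \<le> (R+1)*l"
    by simp
  ultimately have "hist L \<subseteq> delivered f l coin D"
    unfolding delivered_def Let_def u_def[symmetric] using commit by blast
  with L show ?thesis
    by blast
qed

section \<open>Common core\<close>

lemma exists_frequent_member:
  fixes H Y :: "'a set" and S :: "'a \<Rightarrow> 'a set"
  assumes "finite H" and "card H = d + f" and "f < d" and "Y \<subseteq> H"
    and S: "\<And>y. y \<in> Y \<Longrightarrow> S y \<subseteq> H \<and> d \<le> card (S y)"
  shows "\<exists>a\<in>H. card Y < card {y\<in>Y. a \<in> S y} + d"
proof (rule ccontr)
  define c where "c a = card {y\<in>Y. a \<in> S y}" for a
  have Y: "finite Y" "card Y \<le> d + f"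
    using assms(1,2,4) card_mono finite_subset by metis+
  assume "\<not> ?thesis"
  then have "(\<Sum>a\<in>H. c a + d) \<le> (\<Sum>a\<in>H. card Y)"
    by (intro sum_mono) (simp add: not_less c_def)
  then have upper: "(\<Sum>a\<in>H. c a) + (d + f) * d \<le> (d + f) * card Y"
    using assms(2) by (simp add: sum.distrib)
  have "(\<Sum>a\<in>H. c a) = (\<Sum>a\<in>H. \<Sum>y\<in>Y. if a \<in> S y then 1 else 0)"
    using Y(1) by (simp add: c_def sum.inter_filter[symmetric])
  also have "\<dots> = (\<Sum>y\<in>Y. card {a\<in>H. a \<in> S y})"
    using assms(1) by (subst sum.swap) (simp add: sum.inter_filter[symmetric])
  also have "\<dots> = (\<Sum>y\<in>Y. card (S y))"
    using S by (intro sum.cong) (auto intro: arg_cong[where f = card])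
  also have "\<dots> \<ge> card Y * d"
    using sum_mono[of Y "\<lambda>_. d" "\<lambda>y. card (S y)"] S by simp
  finally have "(d + f) * d \<le> f * card Y"
    using upper by (simp add: algebra_simps)
  also have "\<dots> \<le> f * (d + f)"
    using Y(2) by simp
  finally show False
    using assms(3) by (simp add: mult.commute)
qed

lemma common_core:
  fixes H Y :: "'a set" and S :: "'a \<Rightarrow> 'a set"
  assumes "finite H" and "card H = d + f" and "f < d" and "Y \<subseteq> H"
    and "\<And>y. y \<in> Y \<Longrightarrow> S y \<subseteq> H \<and> d \<le> card (S y)"
  shows "\<exists>a\<in>H. \<forall>X\<subseteq>Y. d \<le> card X \<longrightarrow> (\<exists>y\<in>X. a \<in> S y)"
proof -
  obtain a where "a \<in> H" and a: "card Y < card {y\<in>Y. a \<in> S y} + d"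
    using exists_frequent_member[of H d f Y S] assms by blast
  have "finite Y"
    using assms(1,4) finite_subset by blast
  have "\<exists>y\<in>X. a \<in> S y" if "X \<subseteq> Y" "d \<le> card X" for X
  proof (rule ccontr)
    assume "\<not> ?thesis"
    then have "card X + card {y\<in>Y. a \<in> S y} = card (X \<union> {y\<in>Y. a \<in> S y})"
      using that \<open>finite Y\<close> finite_subset by (subst card_Un_disjoint) auto
    also have "\<dots> \<le> card Y"
      using that \<open>finite Y\<close> by (intro card_mono) auto
    finally show False
      using a that(2) by simp
  qed
  with \<open>a \<in> H\<close> show ?thesis
    by blast
qed

section \<open>Good windows in uniform random sequences\<close>

lemma exists_list_stepwise:
  assumes "\<And>zs. \<exists>y\<in>A. Q zs y"
  shows "\<exists>ys. length ys = k \<and> set ys \<subseteq> A \<and> (\<forall>j<k. Q (take j ys) (ys ! j))"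
proof (induction k)
  case (Suc k)
  then obtain ys where ys: "length ys = k" "set ys \<subseteq> A" "\<forall>j<k. Q (take j ys) (ys ! j)"
    by blast
  moreover obtain y where "y \<in> A" "Q ys y"
    using assms by blast
  ultimately have "\<forall>j<Suc k. Q (take j (ys @ [y])) ((ys @ [y]) ! j)"
    by (auto simp: nth_append less_Suc_eq)
  with ys \<open>y \<in> A\<close> show ?case
    by (intro exI[of _ "ys @ [y]"]) auto
qed simp

text \<open>Windows and prefixes are lists of coin values; G r xs is the set of good values for
  position r given the values xs at the positions below r.\<close>
definition good_window :: "(nat \<Rightarrow> 'a list \<Rightarrow> 'a set) \<Rightarrow> nat \<Rightarrow> 'a list \<Rightarrow> nat \<Rightarrow> bool" where
  "good_window G w xs \<rho> \<longleftrightarrow> (\<forall>j\<in>{1..w}. xs ! (\<rho>+j) \<in> G (\<rho>+j) (take (\<rho>+j) xs))"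

definition bad_prefixes :: "'a set \<Rightarrow> (nat \<Rightarrow> 'a list \<Rightarrow> 'a set) \<Rightarrow> nat \<Rightarrow> nat \<Rightarrow> nat \<Rightarrow> 'a list set" where
  "bad_prefixes A G w R m = {xs. length xs = R + 1 + w*m \<and> set xs \<subseteq> A \<and>
     (\<forall>k<m. \<not> good_window G w xs (R + w*k))}"

definition bad_extensions :: "'a set \<Rightarrow> (nat \<Rightarrow> 'a list \<Rightarrow> 'a set) \<Rightarrow> nat \<Rightarrow> 'a list \<Rightarrow> nat \<Rightarrow> 'a list set" where
  "bad_extensions A G w xs \<rho> = {ys. length ys = w \<and> set ys \<subseteq> A \<and> \<not> good_window G w (xs @ ys) \<rho>}"

lemma good_window_append:
  assumes "\<rho> + w < length xs"
  shows "good_window G w (xs @ ys) \<rho> \<longleftrightarrow> good_window G w xs \<rho>"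
  unfolding good_window_def using assms by (intro ball_cong) (auto simp: nth_append)

lemma finite_bad_prefixes: "finite A \<Longrightarrow> finite (bad_prefixes A G w R m)"
  by (rule finite_subset[of _ "{xs. set xs \<subseteq> A \<and> length xs = R + 1 + w*m}"])
     (auto simp: bad_prefixes_def intro: finite_lists_length_eq)

lemma finite_bad_extensions: "finite A \<Longrightarrow> finite (bad_extensions A G w xs \<rho>)"
  by (rule finite_subset[of _ "{ys. set ys \<subseteq> A \<and> length ys = w}"])
     (auto simp: bad_extensions_def intro: finite_lists_length_eq)

lemma bad_prefixes_Suc_subset:
  "bad_prefixes A G w R (Suc m) \<subseteq>
     (\<lambda>(xs, ys). xs @ ys) ` (SIGMA xs:bad_prefixes A G w R m. bad_extensions A G w xs (R + w*m))"
proof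
  fix zs assume zs: "zs \<in> bad_prefixes A G w R (Suc m)"
  let ?n = "R + 1 + w*m"
  have "length zs = ?n + w" "set zs \<subseteq> A"
    using zs by (auto simp: bad_prefixes_def)
  moreover have "\<not> good_window G w (take ?n zs) (R + w*k)" if "k < m" for k
  proof -
    have "w*k + w \<le> w*m"
      using mult_le_mono2[of "Suc k" m w] that by simp
    then have "R + w*k + w < length (take ?n zs)"
      using \<open>length zs = ?n + w\<close> by simp
    then show ?thesis
      using zs that good_window_append[of "R + w*k" w "take ?n zs" G "drop ?n zs"]
      by (simp add: bad_prefixes_def)
  qed
  ultimately have "take ?n zs \<in> bad_prefixes A G w R m"
    by (auto simp: bad_prefixes_def dest: in_set_takeD)
  moreover have "drop ?n zs \<in> bad_extensions A G w (take ?n zs) (R + w*m)"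
    using zs \<open>length zs = ?n + w\<close> \<open>set zs \<subseteq> A\<close>
    by (auto simp: bad_prefixes_def bad_extensions_def dest: in_set_dropD)
  ultimately show "zs \<in> (\<lambda>(xs, ys). xs @ ys) ` (SIGMA xs:bad_prefixes A G w R m. bad_extensions A G w xs (R + w*m))"
    by (intro image_eqI[of _ _ "(take ?n zs, drop ?n zs)"]) auto
qed

lemma map_in_bad_prefixes:
  assumes "\<forall>i. \<omega> i \<in> A" and G: "\<And>r. G r \<omega> = Gl r (map \<omega> [0..<r])"
    and bad: "\<And>k. k < m \<Longrightarrow> \<not> (\<forall>j\<in>{1..w}. \<omega> (R + w*k + j) \<in> G (R + w*k + j) \<omega>)"
  shows "map \<omega> [0..<R+1+w*m] \<in> bad_prefixes A Gl w R m"
proof -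
  have "\<not> good_window Gl w (map \<omega> [0..<R+1+w*m]) (R + w*k)" if "k < m" for k
  proof -
    have "R + w*k + w < R + 1 + w*m"
      using mult_le_mono2[of "Suc k" m w] that by simp
    then have "good_window Gl w (map \<omega> [0..<R+1+w*m]) (R + w*k)
        \<longleftrightarrow> (\<forall>j\<in>{1..w}. \<omega> (R + w*k + j) \<in> G (R + w*k + j) \<omega>)"
      unfolding good_window_def G by (intro ball_cong refl) (simp add: take_map del: upt_Suc)
    then show ?thesis
      using bad[OF that] by blast
  qed
  then show ?thesis
    unfolding bad_prefixes_def using assms(1) by auto
qed

lemma card_bad_extensions:
  assumes "finite A" and hit: "\<And>r zs. 0 < r \<Longrightarrow> G r zs \<inter> A \<noteq> {}" and "length xs = \<rho> + 1"
  shows "card (bad_extensions A G w xs \<rho>) \<le> card A ^ w - 1"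
proof -
  let ?L = "{ys. set ys \<subseteq> A \<and> length ys = w}"
  have "G (\<rho> + 1 + length zs) (xs @ zs) \<inter> A \<noteq> {}" for zs
    by (rule hit) simp
  then have "\<exists>y\<in>A. y \<in> G (\<rho> + 1 + length zs) (xs @ zs)" for zs
    by blast
  then obtain g where g: "length g = w" "set g \<subseteq> A"
    and g_good: "\<forall>j<w. g ! j \<in> G (\<rho> + 1 + length (take j g)) (xs @ take j g)"
    using exists_list_stepwise[of A "\<lambda>zs y. y \<in> G (\<rho> + 1 + length zs) (xs @ zs)" w] by blast
  have "good_window G w (xs @ g) \<rho>"
    unfolding good_window_def
  proof
    fix j :: nat assume j: "j \<in> {1..w}"
    then have "j - 1 < w" "\<rho> + 1 + length (take (j - 1) g) = \<rho> + j"
      using g(1) by auto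
    then have "g ! (j - 1) \<in> G (\<rho> + j) (xs @ take (j - 1) g)"
      using g_good by metis
    then show "(xs @ g) ! (\<rho> + j) \<in> G (\<rho> + j) (take (\<rho> + j) (xs @ g))"
      using assms(3) j by (simp add: nth_append)
  qed
  then have "bad_extensions A G w xs \<rho> \<subseteq> ?L - {g}"
    unfolding bad_extensions_def by blast
  then have "card (bad_extensions A G w xs \<rho>) \<le> card (?L - {g})"
    using finite_lists_length_eq[OF assms(1)] by (intro card_mono) auto
  also have "\<dots> = card A ^ w - 1"
    using g card_lists_length_eq[OF assms(1)] finite_lists_length_eq[OF assms(1)] by (simp add: card_Diff_singleton)
  finally show ?thesis .
qed

lemma card_bad_prefixes:
  assumes "finite A" and hit: "\<And>r zs. 0 < r \<Longrightarrow> G r zs \<inter> A \<noteq> {}"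
  shows "card (bad_prefixes A G w R m) \<le> card A ^ (R + 1) * (card A ^ w - 1) ^ m"
proof (induction m)
  case 0
  have "bad_prefixes A G w R 0 \<subseteq> {xs. set xs \<subseteq> A \<and> length xs = R + 1}"
    by (auto simp: bad_prefixes_def)
  then have "card (bad_prefixes A G w R 0) \<le> card {xs. set xs \<subseteq> A \<and> length xs = R + 1}"
    by (intro card_mono) (auto intro: finite_lists_length_eq assms(1))
  then show ?case
    using card_lists_length_eq[OF assms(1)] by simp
next
  case (Suc m)
  define B where "B xs = bad_extensions A G w xs (R + w*m)" for xs
  have finite_B: "finite (B xs)" for xs
    unfolding B_def by (rule finite_bad_extensions[OF assms(1)])
  have card_B: "card (B xs) \<le> card A ^ w - 1" if "xs \<in> bad_prefixes A G w R m" for xs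
    unfolding B_def using that by (intro card_bad_extensions[OF assms]) (auto simp: bad_prefixes_def)
  have "card (bad_prefixes A G w R (Suc m)) \<le> card ((\<lambda>(xs, ys). xs @ ys) ` (SIGMA xs:bad_prefixes A G w R m. B xs))"
    unfolding B_def
    by (intro card_mono bad_prefixes_Suc_subset finite_imageI finite_SigmaI finite_bad_prefixes
        finite_bad_extensions assms(1))
  also have "\<dots> \<le> card (SIGMA xs:bad_prefixes A G w R m. B xs)"
    by (intro card_image_le finite_SigmaI finite_bad_prefixes assms(1) finite_B)
  also have "\<dots> = (\<Sum>xs\<in>bad_prefixes A G w R m. card (B xs))"
    by (intro card_SigmaI finite_bad_prefixes assms(1) ballI finite_B)
  also have "\<dots> \<le> card (bad_prefixes A G w R m) * (card A ^ w - 1)"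
    using sum_mono[OF card_B] by simp
  also have "\<dots> \<le> card A ^ (R + 1) * (card A ^ w - 1) ^ m * (card A ^ w - 1)"
    using Suc.IH by simp
  finally show ?case
    by (simp add: ac_simps)
qed

locale uniform_sequence =
  fixes A :: "'a set"
  assumes finite_A: "finite A" and A_nonempty: "A \<noteq> {}"
begin

abbreviation \<mu> :: "(nat \<Rightarrow> 'a) measure" where
  "\<mu> \<equiv> PiM UNIV (\<lambda>_::nat. measure_pmf (pmf_of_set A))"

interpretation product_prob_space "\<lambda>_::nat. measure_pmf (pmf_of_set A)" UNIV
  by unfold_locales

definition cylinder :: "'a list \<Rightarrow> (nat \<Rightarrow> 'a) set" where
  "cylinder xs = {\<omega>. \<forall>i<length xs. \<omega> i = xs ! i}"

lemma cylinder_eq_prod_emb: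
  "cylinder xs = prod_emb UNIV (\<lambda>_. measure_pmf (pmf_of_set A)) {..<length xs} (PiE {..<length xs} (\<lambda>i. {xs ! i}))"
  by (auto simp: cylinder_def prod_emb_def space_PiM PiE_def Pi_def extensional_def)

lemma cylinder_in_sets: "cylinder xs \<in> sets \<mu>"
  unfolding cylinder_eq_prod_emb by (rule sets_PiM_I) auto

lemma measure_cylinder_le: "measure \<mu> (cylinder xs) \<le> (1 / real (card A)) ^ length xs"
proof -
  have "measure \<mu> (cylinder xs) = (\<Prod>i<length xs. pmf (pmf_of_set A) (xs ! i))"
    unfolding cylinder_eq_prod_emb by (subst measure_PiM_emb) (auto simp: measure_pmf_single)
  also have "\<dots> \<le> (\<Prod>i<length xs. 1 / real (card A))"
    using finite_A A_nonempty by (intro prod_mono) (simp add: indicator_def)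
  finally show ?thesis
    by simp
qed

definition prefix_event :: "nat \<Rightarrow> 'a list set \<Rightarrow> (nat \<Rightarrow> 'a) set" where
  "prefix_event N S = {\<omega>. map \<omega> [0..<N] \<in> S}"

lemma prefix_event_eq_UN:
  assumes "\<forall>xs\<in>S. length xs = N"
  shows "prefix_event N S = (\<Union>xs\<in>S. cylinder xs)"
proof (intro set_eqI iffI)
  fix \<omega> assume "\<omega> \<in> prefix_event N S"
  moreover have "\<omega> \<in> cylinder (map \<omega> [0..<N])"
    by (simp add: cylinder_def)
  ultimately show "\<omega> \<in> (\<Union>xs\<in>S. cylinder xs)"
    by (auto simp: prefix_event_def)
next
  fix \<omega> assume "\<omega> \<in> (\<Union>xs\<in>S. cylinder xs)"
  then obtain xs where "xs \<in> S" "\<omega> \<in> cylinder xs"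
    by blast
  moreover from this have "map \<omega> [0..<N] = xs"
    using assms by (intro nth_equalityI) (auto simp: cylinder_def)
  ultimately show "\<omega> \<in> prefix_event N S"
    by (simp add: prefix_event_def)
qed

lemma prefix_event_in_sets: "finite S \<Longrightarrow> \<forall>xs\<in>S. length xs = N \<Longrightarrow> prefix_event N S \<in> sets \<mu>"
  using cylinder_in_sets by (simp add: prefix_event_eq_UN sets.finite_UN)

lemma measure_prefix_event_le:
  assumes "finite S" and "\<forall>xs\<in>S. length xs = N"
  shows "measure \<mu> (prefix_event N S) \<le> real (card S) * (1 / real (card A)) ^ N"
proof -
  have "measure \<mu> (prefix_event N S) \<le> (\<Sum>xs\<in>S. measure \<mu> (cylinder xs))"
    unfolding prefix_event_eq_UN[OF assms(2)] using assms(1) cylinder_in_sets by (rule measure_UNION_le)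
  also have "\<dots> \<le> (\<Sum>xs\<in>S. (1 / real (card A)) ^ N)"
    using measure_cylinder_le assms(2) by (intro sum_mono) auto
  finally show ?thesis
    by simp
qed

lemma AE_in_A: "AE \<omega> in \<mu>. \<forall>i. \<omega> i \<in> A"
proof -
  have "AE x in measure_pmf (pmf_of_set A). x \<in> A"
    using finite_A A_nonempty by (simp add: AE_measure_pmf_iff)
  then have "AE \<omega> in \<mu>. \<omega> i \<in> A" for i
    by (rule AE_component[rotated]) simp
  then show ?thesis
    by (simp add: AE_all_countable)
qed

lemma measure_bad_prefixes_le:
  assumes "\<And>r zs. 0 < r \<Longrightarrow> G r zs \<inter> A \<noteq> {}"
  shows "measure \<mu> (prefix_event (R+1+w*m) (bad_prefixes A G w R m))
    \<le> ((real (card A) ^ w - 1) / real (card A) ^ w) ^ m"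
proof -
  let ?c = "real (card A)"
  have c: "1 \<le> card A"
    using finite_A A_nonempty by (simp add: Suc_le_eq card_gt_0_iff)
  have "card (bad_prefixes A G w R m) \<le> card A ^ (R+1) * (card A ^ w - 1) ^ m"
    by (rule card_bad_prefixes[OF finite_A assms])
  moreover have "real (card A ^ w - 1) = ?c ^ w - 1"
    using c by (simp add: of_nat_diff)
  ultimately have card_le: "real (card (bad_prefixes A G w R m)) \<le> ?c ^ (R+1) * (?c ^ w - 1) ^ m"
    by (metis of_nat_le_iff of_nat_mult of_nat_power)
  have "measure \<mu> (prefix_event (R+1+w*m) (bad_prefixes A G w R m))
      \<le> real (card (bad_prefixes A G w R m)) * (1 / ?c) ^ (R+1+w*m)"
    by (rule measure_prefix_event_le[OF finite_bad_prefixes[OF finite_A]]) (simp add: bad_prefixes_def)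
  also have "\<dots> \<le> ?c ^ (R+1) * (?c ^ w - 1) ^ m * (1 / ?c) ^ (R+1+w*m)"
    using card_le by (rule mult_right_mono) simp
  also have "\<dots> = (?c * (1 / ?c)) ^ (R+1) * ((?c ^ w - 1) * (1 / ?c) ^ w) ^ m"
    unfolding power_add power_mult power_mult_distrib by (simp only: ac_simps)
  also have "\<dots> = ((?c ^ w - 1) / ?c ^ w) ^ m"
    using c by (simp add: power_one_over)
  finally show ?thesis .
qed

lemma bad_forever_null:
  assumes "\<And>r zs. 0 < r \<Longrightarrow> G r zs \<inter> A \<noteq> {}"
  shows "(\<Inter>m. prefix_event (R+1+w*m) (bad_prefixes A G w R m)) \<in> null_sets \<mu>"
proof -
  let ?B = "\<lambda>m. prefix_event (R+1+w*m) (bad_prefixes A G w R m)"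
  let ?\<theta> = "(real (card A) ^ w - 1) / real (card A) ^ w"
  have B: "?B m \<in> sets \<mu>" for m
    by (intro prefix_event_in_sets finite_bad_prefixes finite_A) (simp add: bad_prefixes_def)
  have "1 \<le> real (card A) ^ w"
    using finite_A A_nonempty by (simp add: Suc_le_eq card_gt_0_iff)
  then have "0 \<le> ?\<theta>" "?\<theta> < 1"
    by (simp_all add: divide_less_eq)
  then have lim: "(\<lambda>m. ?\<theta> ^ m) \<longlonglongrightarrow> 0"
    by (intro LIMSEQ_power_zero) simp
  have le: "measure \<mu> (\<Inter>m. ?B m) \<le> ?\<theta> ^ m" for m
  proof -
    have "measure \<mu> (\<Inter>m. ?B m) \<le> measure \<mu> (?B m)"
      using B by (intro finite_measure_mono) auto
    then show ?thesis
      by (rule order_trans[OF _ measure_bad_prefixes_le[OF assms]])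
  qed
  have "measure \<mu> (\<Inter>m. ?B m) \<le> 0"
    by (rule LIMSEQ_le_const[OF lim]) (use le in blast)
  moreover have "(\<Inter>m. ?B m) \<in> sets \<mu>"
    using B by blast
  ultimately show ?thesis
    by (simp add: null_sets_def emeasure_eq_measure measure_le_0_iff)
qed

theorem AE_frequently_good_window:
  fixes G :: "nat \<Rightarrow> (nat \<Rightarrow> 'a) \<Rightarrow> 'a set"
  assumes adapted: "\<And>r \<omega> \<omega>'. \<forall>i<r. \<omega> i = \<omega>' i \<Longrightarrow> G r \<omega> = G r \<omega>'"
    and hit: "\<And>r \<omega>. 0 < r \<Longrightarrow> G r \<omega> \<inter> A \<noteq> {}"
  shows "AE \<omega> in \<mu>. \<exists>\<^sub>F R in sequentially. \<forall>j\<in>{1..w}. \<omega> (R+j) \<in> G (R+j) \<omega>"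
proof -
  define Gl where "Gl r xs = G r (\<lambda>i. if i < length xs then xs ! i else undefined)" for r xs
  have G_eq: "G r \<omega> = Gl r (map \<omega> [0..<r])" for r \<omega>
    unfolding Gl_def by (rule adapted) simp
  let ?Bad = "\<Union>R. \<Inter>m. prefix_event (R+1+w*m) (bad_prefixes A Gl w R m)"
  have null: "?Bad \<in> null_sets \<mu>"
    using hit by (intro null_sets_UN bad_forever_null) (simp add: Gl_def)
  have bad: "\<omega> \<in> ?Bad"
    if in_A: "\<forall>i. \<omega> i \<in> A"
      and not_frequently: "\<not> (\<exists>\<^sub>F R in sequentially. \<forall>j\<in>{1..w}. \<omega> (R+j) \<in> G (R+j) \<omega>)" for \<omega>
  proof -
    obtain R where R: "\<And>R'. R \<le> R' \<Longrightarrow> \<not> (\<forall>j\<in>{1..w}. \<omega> (R'+j) \<in> G (R'+j) \<omega>)"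
      using not_frequently unfolding frequently_sequentially by auto
    have "map \<omega> [0..<R+1+w*m] \<in> bad_prefixes A Gl w R m" for m
      using R le_add1 by (intro map_in_bad_prefixes[where G = G and Gl = Gl, OF in_A G_eq]) blast
    then show ?thesis
      unfolding prefix_event_def by blast
  qed
  from AE_in_A AE_not_in[OF null] show ?thesis
  proof eventually_elim
    case (elim \<omega>)
    show ?case
    proof (rule ccontr)
      assume "\<not> ?case"
      from bad[OF elim(1) this] elim(2) show False
        by contradiction
    qed
  qed
qed

end

locale mahi_execution =
  fixes f :: nat and Byz :: "nat set" and E :: "'m exec"
  assumes exec_admissible: "admissible f Byz E"
    and Byz_subset: "Byz \<subseteq> {..<3*f+1}"
    and card_Byz: "card Byz \<le> f"
begin

abbreviation Hon :: "nat set" where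
  "Hon \<equiv> {i. honest f Byz i}"

lemma Hon_eq: "Hon = {..<3*f+1} - Byz"
  by (auto simp: honest_def)

lemma finite_Hon [simp]: "finite Hon"
  by (simp add: Hon_eq)

lemma card_Hon: "card Hon = 3*f+1 - card Byz"
  using Byz_subset by (simp add: Hon_eq card_Diff_subset finite_subset)

lemma card_Hon_ge: "2*f+1 \<le> card Hon"
  using card_Hon card_Byz by simp

lemma card_le_card_Int_Hon:
  assumes "A \<subseteq> {..<3*f+1}"
  shows "card A \<le> card (A \<inter> Hon) + card Byz"
proof -
  have "card A \<le> card ((A \<inter> Hon) \<union> Byz)"
    using assms Byz_subset by (intro card_mono) (auto simp: Hon_eq intro: finite_subset)
  also have "\<dots> \<le> card (A \<inter> Hon) + card Byz"
    by (rule card_Un_le)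
  finally show ?thesis .
qed

lemma quorum_if_all_honest:
  assumes "finite D" and "\<forall>j\<in>Hon. \<exists>b\<in>D. auth b = j \<and> rnd b = r"
  shows "quorum f D r"
proof -
  have "Hon \<subseteq> authors_at D r"
    using assms(2) by (force simp: authors_at_def)
  then have "card Hon \<le> card (authors_at D r)"
    using assms(1) by (intro card_mono) (auto simp: authors_at_def)
  then show ?thesis
    using card_Hon_ge by (simp add: quorum_def)
qed

lemma dag_finite: "honest f Byz i \<Longrightarrow> finite (dag E i t)"
  using exec_admissible by (simp add: admissible_def)

lemma dag_mono: "honest f Byz i \<Longrightarrow> t \<le> t' \<Longrightarrow> dag E i t \<subseteq> dag E i t'"
  using exec_admissible lift_Suc_mono_le[of "dag E i"] by (simp add: admissible_def)

lemma dag_valid: "honest f Byz i \<Longrightarrow> b \<in> dag E i t \<Longrightarrow> valid f b"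
  using exec_admissible by (simp add: admissible_def)

lemma dag_pars: "honest f Byz i \<Longrightarrow> b \<in> dag E i t \<Longrightarrow> set (pars b) \<subseteq> dag E i t"
  using exec_admissible by (simp add: admissible_def)

lemma dag_hist: "honest f Byz i \<Longrightarrow> b \<in> dag E i t \<Longrightarrow> hist b \<subseteq> dag E i t"
  using hist_subset_of_parent_closed[of "dag E i t" b] dag_pars by blast

lemma hblk_created:
  assumes "honest f Byz i" and "htime E i r = Some \<tau>"
  shows "\<exists>t. \<tau> = Suc t \<and> 1 \<le> r
    \<and> (1 < r \<longrightarrow> (\<exists>\<tau>'. htime E i (r - 1) = Some \<tau>' \<and> \<tau>' \<le> t) \<and> quorum f (dag E i t) (r - 1))
    \<and> auth (hblk E i r) = i \<and> rnd (hblk E i r) = r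
    \<and> set (pars (hblk E i r)) = honest_parents E i r (dag E i t)
    \<and> hblk E i r \<in> dag E i \<tau>"
  using exec_admissible assms unfolding admissible_def by blast

lemma hblk_auth: "honest f Byz i \<Longrightarrow> htime E i r = Some \<tau> \<Longrightarrow> auth (hblk E i r) = i"
  using hblk_created by blast

lemma hblk_rnd: "honest f Byz i \<Longrightarrow> htime E i r = Some \<tau> \<Longrightarrow> rnd (hblk E i r) = r"
  using hblk_created by blast

lemma hblk_in_dag: "honest f Byz i \<Longrightarrow> htime E i r = Some \<tau> \<Longrightarrow> hblk E i r \<in> dag E i \<tau>"
  using hblk_created by blast

lemma htime_pred:
  assumes "honest f Byz i" and "htime E i (Suc r) = Some \<tau>" and "1 \<le> r"
  shows "\<exists>\<tau>'. htime E i r = Some \<tau>' \<and> \<tau>' < \<tau>"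
  using hblk_created[OF assms(1,2)] assms(3) by fastforce

lemma dag_honest_block:
  assumes "honest f Byz i" and "b \<in> dag E i t" and "honest f Byz (auth b)"
  shows "b = hblk E (auth b) (rnd b) \<and> (\<exists>\<tau>\<le>t. htime E (auth b) (rnd b) = Some \<tau>)"
proof -
  have "\<exists>r \<tau>. htime E (auth b) r = Some \<tau> \<and> \<tau> \<le> t \<and> b = hblk E (auth b) r"
    using exec_admissible assms unfolding admissible_def by blast
  then obtain r \<tau> where "htime E (auth b) r = Some \<tau>" "\<tau> \<le> t" "b = hblk E (auth b) r"
    by blast
  moreover from this have "rnd b = r"
    using hblk_rnd[OF assms(3)] by metis
  ultimately show ?thesis
    by blast
qed

lemma htime_mono:
  assumes "honest f Byz i" and "htime E i r = Some \<tau>" and "1 \<le> r'" and "r' \<le> r"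
  shows "\<exists>\<tau>'\<le>\<tau>. htime E i r' = Some \<tau>'"
  using assms(2,4)
proof (induction r arbitrary: \<tau>)
  case (Suc r)
  show ?case
  proof (cases "r' = Suc r")
    case False
    with Suc.prems assms(3) obtain \<tau>' where "htime E i r = Some \<tau>'" "\<tau>' < \<tau>" "r' \<le> r"
      using htime_pred[OF assms(1)] by fastforce
    with Suc.IH show ?thesis
      by (meson less_imp_le order_trans)
  qed (use Suc.prems in auto)
qed simp

lemma round_le_htime: "honest f Byz i \<Longrightarrow> htime E i r = Some \<tau> \<Longrightarrow> r \<le> \<tau>"
proof (induction r arbitrary: \<tau>)
  case (Suc r)
  show ?case
  proof (cases "r = 0")
    case True
    then show ?thesis
      using hblk_created[OF Suc.prems] by auto
  next
    case False
    then obtain \<tau>' where "htime E i r = Some \<tau>'" "\<tau>' < \<tau>"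
      using htime_pred[OF Suc.prems] by auto
    with Suc.IH[OF Suc.prems(1)] show ?thesis
      by fastforce
  qed
qed simp

lemma eventually_in_dag:
  assumes "honest f Byz i" and "honest f Byz j" and "htime E j r \<noteq> None"
  shows "\<forall>\<^sub>F t in sequentially. hblk E j r \<in> dag E i t"
proof -
  have "\<exists>t. hblk E j r \<in> dag E i t"
    using exec_admissible assms unfolding admissible_def by blast
  then show ?thesis
    using dag_mono[OF assms(1)] by (auto simp: eventually_sequentially)
qed

text \<open>Liveness: once all honest round-r blocks have arrived, an honest validator holds a
  quorum of round r and may advance.\<close>
lemma htime_defined:
  assumes "honest f Byz i" and "1 \<le> r"
  shows "\<exists>\<tau>. htime E i r = Some \<tau>"
  using assms(2,1)
proof (induction r arbitrary: i rule: nat_induct_at_least)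
  case base
  then show ?case
    using exec_admissible by (auto simp: admissible_def)
next
  case (Suc r)
  have "\<forall>j\<in>Hon. \<forall>\<^sub>F t in sequentially. hblk E j r \<in> dag E i t"
    using Suc eventually_in_dag by fastforce
  then have "\<forall>\<^sub>F t in sequentially. \<forall>j\<in>Hon. hblk E j r \<in> dag E i t"
    by (rule eventually_ball_finite[OF finite_Hon])
  then obtain t where t: "\<forall>j\<in>Hon. hblk E j r \<in> dag E i t"
    using eventually_sequentially by auto
  have "quorum f (dag E i t) r"
  proof (rule quorum_if_all_honest)
    show "\<forall>j\<in>Hon. \<exists>b\<in>dag E i t. auth b = j \<and> rnd b = r"
      using t Suc.IH hblk_auth hblk_rnd by blast
  qed (use dag_finite Suc.prems in auto)
  moreover have "htime E i r \<noteq> None"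
    using Suc by blast
  ultimately have "htime E i (Suc r) \<noteq> None"
    using exec_admissible Suc.hyps Suc.prems unfolding admissible_def by blast
  then show ?case
    by blast
qed

lemma prev_block_parent:
  assumes "honest f Byz a" and "htime E a \<rho> = Some \<tau>" and "1 < \<rho>"
  shows "hblk E a (\<rho> - 1) \<in> set (pars (hblk E a \<rho>))"
proof -
  obtain t \<tau>' where t: "\<tau> = Suc t" "htime E a (\<rho> - 1) = Some \<tau>'" "\<tau>' \<le> t"
    and pars: "set (pars (hblk E a \<rho>)) = honest_parents E a \<rho> (dag E a t)"
    using hblk_created[OF assms(1,2)] assms(3) by blast
  have "hblk E a (\<rho> - 1) \<in> dag E a t"
    using hblk_in_dag[OF assms(1) t(2)] dag_mono[OF assms(1) t(3)] by blast
  moreover have "rnd (hblk E a (\<rho> - 1)) < \<rho>"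
    using hblk_rnd[OF assms(1) t(2)] assms(3) by simp
  ultimately show ?thesis
    using pars by (simp add: honest_parents_def)
qed

text \<open>Honest parents omit only blocks already in the history of the own previous block, so
  nothing the validator held at creation time is lost from the history.\<close>
lemma dag_subset_hist_of_next_block:
  assumes "honest f Byz a" and "htime E a \<rho> = Some (Suc t)" and "x \<in> dag E a t" and "rnd x < \<rho>"
  shows "x \<in> hist (hblk E a \<rho>)"
proof (cases "1 < \<rho> \<and> x \<in> hist (hblk E a (\<rho> - 1))")
  case True
  then show ?thesis
    using prev_block_parent[OF assms(1,2)] hist_subset_of_parent by blast
next
  case False
  have "set (pars (hblk E a \<rho>)) = honest_parents E a \<rho> (dag E a t)"
    using hblk_created[OF assms(1,2)] by auto
  with False assms(3,4) have "x \<in> set (pars (hblk E a \<rho>))"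
    by (auto simp: honest_parents_def)
  then show ?thesis
    using parent_in_hist by blast
qed

lemma hist_hblk_mono:
  assumes "honest f Byz a" and "1 \<le> \<rho>" and "\<rho> \<le> \<rho>'"
  shows "hist (hblk E a \<rho>) \<subseteq> hist (hblk E a \<rho>')"
  using assms(3)
proof (induction \<rho>' rule: dec_induct)
  case (step n)
  obtain \<tau> where "htime E a (Suc n) = Some \<tau>"
    using htime_defined[OF assms(1), of "Suc n"] by auto
  then have "hblk E a n \<in> set (pars (hblk E a (Suc n)))"
    using prev_block_parent[OF assms(1)] step.hyps(1) assms(2) by fastforce
  with step.IH show ?case
    using hist_subset_of_parent by blast
qed simp

lemma eventually_in_hist:
  assumes "honest f Byz k" and "htime E k r \<noteq> None"
  shows "\<forall>\<^sub>F \<rho> in sequentially. \<forall>a\<in>Hon. hblk E k r \<in> hist (hblk E a \<rho>)"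
proof (rule eventually_ball_finite[OF finite_Hon], intro ballI)
  fix a assume "a \<in> Hon"
  then have a: "honest f Byz a"
    by simp
  let ?b = "hblk E k r"
  obtain t where t: "?b \<in> dag E a t"
    using eventually_in_dag[OF a assms] eventually_sequentially by auto
  define \<rho>\<^sub>0 where "\<rho>\<^sub>0 = t + rnd ?b + 1"
  obtain \<tau> where \<tau>: "htime E a \<rho>\<^sub>0 = Some (Suc \<tau>)"
    using htime_defined[OF a, of \<rho>\<^sub>0] hblk_created[OF a] by (fastforce simp: \<rho>\<^sub>0_def)
  then have "t \<le> \<tau>"
    using round_le_htime[OF a \<tau>] by (simp add: \<rho>\<^sub>0_def)
  then have "?b \<in> dag E a \<tau>"
    using t dag_mono[OF a] by blast
  then have "?b \<in> hist (hblk E a \<rho>\<^sub>0)"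
    using dag_subset_hist_of_next_block[OF a \<tau>] by (simp add: \<rho>\<^sub>0_def)
  then show "\<forall>\<^sub>F \<rho> in sequentially. ?b \<in> hist (hblk E a \<rho>)"
    using hist_hblk_mono[OF a] unfolding eventually_sequentially
    by (metis \<rho>\<^sub>0_def le_add2 subsetD)
qed

end

section \<open>Well-referenced leaders are delivered\<close>

context mahi_execution
begin

definition well_referenced :: "nat \<Rightarrow> nat \<Rightarrow> bool" where
  "well_referenced r a \<longleftrightarrow> honest f Byz a \<and> 1 \<le> r \<and>
     f + 1 \<le> card {x. honest f Byz x \<and> htime E x (r+2) \<noteq> None \<and> hblk E a r \<in> hist (hblk E x (r+2))}"

lemma well_referenced_in_hist:
  assumes "well_referenced r a" and "honest f Byz i" and "c \<in> dag E i t" and "rnd c = r + 3"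
  shows "hblk E a r \<in> hist c"
proof -
  let ?X = "{x. honest f Byz x \<and> htime E x (r+2) \<noteq> None \<and> hblk E a r \<in> hist (hblk E x (r+2))}"
  let ?A = "authors_at (set (pars c)) (r+2)"
  have c: "valid f c"
    using dag_valid[OF assms(2,3)] .
  have "?A \<inter> ?X \<noteq> {}"
  proof (rule quorum_intersection)
    show "?A \<subseteq> {..<3*f+1}" "2*f+1 \<le> card ?A"
      using authors_at_parents_subset[OF c] quorum_of_parents[OF c] assms(4) by simp_all
    show "?X \<subseteq> {..<3*f+1}" "f+1 \<le> card ?X"
      using assms(1) by (auto simp: honest_def well_referenced_def)
  qed
  then obtain p where p: "p \<in> set (pars c)" "rnd p = r+2" and x: "auth p \<in> ?X"
    by (auto simp: authors_at_def)
  have "p \<in> dag E i t"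
    using dag_pars[OF assms(2,3)] p(1) by blast
  then have "p = hblk E (auth p) (r+2)"
    using dag_honest_block[OF assms(2)] x p(2) by force
  then show ?thesis
    using x hist_subset_of_parent[OF p(1)] by auto
qed

lemma votes_hblk:
  assumes "honest f Byz a" and "htime E a r = Some \<tau>" and "honest f Byz i"
    and "c \<in> dag E i t" and "r < rnd c" and "hblk E a r \<in> hist c"
  shows "votes c (hblk E a r)"
proof (rule votes_if_unique_in_hist)
  show "rnd (hblk E a r) < rnd c"
    using hblk_rnd[OF assms(1,2)] assms(5) by simp
  fix x assume "x \<in> hist c" "auth x = auth (hblk E a r)" "rnd x = rnd (hblk E a r)"
  then show "x = hblk E a r"
    using dag_hist[OF assms(3,4)] dag_honest_block[OF assms(3)] assms(1,2) hblk_auth hblk_rnd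
    by (metis subsetD)
qed (fact assms(6))

lemma well_referenced_cert:
  assumes "well_referenced r a" and "honest f Byz j" and "htime E j (r+4) = Some \<tau>"
  shows "cert f (hblk E j (r+4)) (hblk E a r)"
proof -
  let ?B = "hblk E j (r+4)" and ?L = "hblk E a r"
  have a: "honest f Byz a" "1 \<le> r"
    using assms(1) by (auto simp: well_referenced_def)
  then obtain \<tau>\<^sub>a where \<tau>\<^sub>a: "htime E a r = Some \<tau>\<^sub>a"
    using htime_defined by blast
  have L: "rnd ?L = r"
    using hblk_rnd[OF a(1) \<tau>\<^sub>a] .
  have B: "?B \<in> dag E j \<tau>" "rnd ?B = r + 4"
    using hblk_in_dag[OF assms(2,3)] hblk_rnd[OF assms(2,3)] .
  have votes: "votes p ?L" if "p \<in> set (pars ?B)" "rnd p = r + 3" for p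
  proof -
    have "p \<in> dag E j \<tau>"
      using dag_pars[OF assms(2) B(1)] that(1) by blast
    then show ?thesis
      using votes_hblk[OF a(1) \<tau>\<^sub>a assms(2)] well_referenced_in_hist[OF assms(1,2)] that(2) by simp
  qed
  have "2*f+1 \<le> card (authors_at (set (pars ?B)) (r+3))"
    using quorum_of_parents[OF dag_valid[OF assms(2) B(1)]] B(2) by (simp add: add.commute)
  moreover have "{p \<in> set (pars ?B). rnd p = rnd ?L + 3 \<and> votes p ?L} = {p \<in> set (pars ?B). rnd p = r + 3}"
    using votes L by auto
  ultimately show ?thesis
    using B(2) L by (simp add: cert_def authors_at_def)
qed

lemma well_referenced_direct_commit:
  assumes "well_referenced r a" and "coin r ! 0 = a" and "honest f Byz i"
    and "hblk E a r \<in> dag E i t" and "\<forall>j\<in>Hon. hblk E j (r+4) \<in> dag E i t"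
  shows "direct_commit f coin (dag E i t) r 0 (hblk E a r)"
proof -
  let ?L = "hblk E a r" and ?D = "dag E i t"
  have a: "honest f Byz a" "1 \<le> r"
    using assms(1) by (auto simp: well_referenced_def)
  then obtain \<tau>\<^sub>a where \<tau>\<^sub>a: "htime E a r = Some \<tau>\<^sub>a"
    using htime_defined by blast
  have "Hon \<subseteq> auth ` {c \<in> ?D. cert f c ?L}"
  proof
    fix j assume "j \<in> Hon"
    then obtain \<tau> where j: "honest f Byz j" "htime E j (r+4) = Some \<tau>"
      using htime_defined[of j "r+4"] by auto
    then show "j \<in> auth ` {c \<in> ?D. cert f c ?L}"
      using well_referenced_cert[OF assms(1) j] hblk_auth[OF j] assms(5) by force
  qed
  then have "card Hon \<le> card (auth ` {c \<in> ?D. cert f c ?L})"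
    using dag_finite[OF assms(3)] by (intro card_mono) auto
  then show ?thesis
    using card_Hon_ge assms(2,4) hblk_auth[OF a(1) \<tau>\<^sub>a] hblk_rnd[OF a(1) \<tau>\<^sub>a]
    by (simp add: direct_commit_def in_slot_def)
qed

lemma hblk_auth_rnd:
  assumes "honest f Byz j" and "1 \<le> \<rho>"
  shows "auth (hblk E j \<rho>) = j" and "rnd (hblk E j \<rho>) = \<rho>"
proof -
  obtain \<tau> where "htime E j \<rho> = Some \<tau>"
    using htime_defined[OF assms] by blast
  then show "auth (hblk E j \<rho>) = j" and "rnd (hblk E j \<rho>) = \<rho>"
    using hblk_auth[OF assms(1)] hblk_rnd[OF assms(1)] by simp_all
qed

lemma eventually_dag_contains_rounds:
  assumes "honest f Byz i"
  shows "\<forall>\<^sub>F t in sequentially. \<forall>j\<in>Hon. \<forall>\<rho>\<in>{1..n}. hblk E j \<rho> \<in> dag E i t"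
proof -
  have ev: "\<forall>\<^sub>F t in sequentially. hblk E j \<rho> \<in> dag E i t" if "j \<in> Hon" "\<rho> \<in> {1..n}" for j \<rho>
  proof -
    have "htime E j \<rho> \<noteq> None"
      using htime_defined that by fastforce
    with that show ?thesis
      using eventually_in_dag[OF assms] by simp
  qed
  show ?thesis
    by (intro eventually_ball_finite[OF finite_Hon] ballI eventually_ball_finite[OF finite_atLeastAtMost] ev)
qed

lemma known_if_rounds_present:
  assumes "honest f Byz i" and "\<forall>j\<in>Hon. \<forall>\<rho>\<in>{1..n}. hblk E j \<rho> \<in> dag E i t" and "\<rho> + 4 \<le> n"
  shows "known f (dag E i t) \<rho>"
  unfolding known_def
proof (rule quorum_if_all_honest[OF dag_finite[OF assms(1)]], intro ballI)
  fix j assume "j \<in> Hon"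
  then show "\<exists>b\<in>dag E i t. auth b = j \<and> rnd b = \<rho> + 4"
    using assms(2,3) hblk_auth_rnd[of j "\<rho>+4"] by (intro bexI[of _ "hblk E j (\<rho>+4)"]) auto
qed

lemma max_rnd_if_rounds_present:
  assumes "honest f Byz i" and "\<forall>j\<in>Hon. \<forall>\<rho>\<in>{1..n}. hblk E j \<rho> \<in> dag E i t" and "1 \<le> n"
  shows "n \<le> Max (insert 0 (rnd ` dag E i t))"
proof -
  obtain j where "j \<in> Hon"
    using card_Hon_ge by fastforce
  then have "hblk E j n \<in> dag E i t" "rnd (hblk E j n) = n"
    using assms(2,3) hblk_auth_rnd by auto
  then show ?thesis
    using dag_finite[OF assms(1)] by (intro Max_ge) (auto intro: rev_image_eqI)
qed

lemma delivered_if_window_well_referenced: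
  assumes "1 \<le> l"
    and window: "\<forall>k\<in>{1..5}. well_referenced (R+k) (coin (R+k) ! 0)"
    and "\<forall>a\<in>Hon. b \<in> hist (hblk E a (R+1))"
    and i: "honest f Byz i"
  shows "\<exists>t. b \<in> delivered f l coin (dag E i t)"
proof -
  obtain t where t: "\<forall>j\<in>Hon. \<forall>\<rho>\<in>{1..R+9}. hblk E j \<rho> \<in> dag E i t"
    using eventually_dag_contains_rounds[OF i] unfolding eventually_sequentially by blast
  let ?D = "dag E i t"
  have "\<forall>\<rho>\<le>R+5. known f ?D \<rho>"
    using known_if_rounds_present[OF i t] by simp
  moreover have "\<forall>k\<in>{1..5}. \<exists>L. direct_commit f coin ?D (R+k) 0 L"
  proof
    fix k :: nat assume k: "k \<in> {1..5}"
    then have "coin (R+k) ! 0 \<in> Hon"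
      using window by (simp add: well_referenced_def)
    with k t have "direct_commit f coin ?D (R+k) 0 (hblk E (coin (R+k) ! 0) (R+k))"
      by (intro well_referenced_direct_commit[OF bspec[OF window k] _ i]) auto
    then show "\<exists>L. direct_commit f coin ?D (R+k) 0 L" ..
  qed
  moreover have "R + 1 \<le> Max (insert 0 (rnd ` ?D))"
    using max_rnd_if_rounds_present[OF i t] by simp
  ultimately obtain L where L: "direct_commit f coin ?D (R+1) 0 L" "hist L \<subseteq> delivered f l coin ?D"
    using hist_subset_delivered[OF assms(1) dag_finite[OF i]] by blast
  have "coin (R+1) ! 0 \<in> Hon"
    using bspec[OF window, of 1] by (simp add: well_referenced_def)
  moreover have "L \<in> ?D" "auth L = coin (R+1) ! 0" "rnd L = R+1"
    using L(1) by (auto simp: direct_commit_def in_slot_def)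
  ultimately have "L = hblk E (coin (R+1) ! 0) (R+1)"
    using dag_honest_block[OF i] by force
  then show ?thesis
    using assms(3) \<open>coin (R+1) ! 0 \<in> Hon\<close> L(2) by blast
qed

lemma validity_if_windows_well_referenced:
  assumes "1 \<le> l"
    and "\<exists>\<^sub>F R in sequentially. \<forall>k\<in>{1..5}. well_referenced (R+k) (coin (R+k) ! 0)"
    and "honest f Byz k" and "honest f Byz i" and "htime E k r \<noteq> None"
  shows "\<exists>t. hblk E k r \<in> delivered f l coin (dag E i t)"
proof -
  have "\<forall>\<^sub>F R in sequentially. \<forall>a\<in>Hon. hblk E k r \<in> hist (hblk E a (R+1))"
    using eventually_in_hist[OF assms(3,5)]
      eventually_sequentially_seg[of "\<lambda>\<rho>. \<forall>a\<in>Hon. hblk E k r \<in> hist (hblk E a \<rho>)" 1] by blast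
  with assms(2) have "\<exists>\<^sub>F R in sequentially. (\<forall>k\<in>{1..5}. well_referenced (R+k) (coin (R+k) ! 0))
      \<and> (\<forall>a\<in>Hon. hblk E k r \<in> hist (hblk E a (R+1)))"
    by (rule frequently_eventually_frequently)
  then show ?thesis
    using delivered_if_window_well_referenced[OF assms(1) _ _ assms(4)] by (blast dest: frequently_ex)
qed

end

section \<open>The common core of an execution\<close>

context mahi_execution
begin

lemma card_honest_parents:
  assumes "honest f Byz i" and "c \<in> dag E i t" and "1 < rnd c"
  shows "card Hon - f \<le> card {j\<in>Hon. hblk E j (rnd c - 1) \<in> set (pars c)}"
proof -
  let ?A = "authors_at (set (pars c)) (rnd c - 1)"
  have c: "valid f c"
    using dag_valid[OF assms(1,2)] .
  have "?A \<inter> Hon \<subseteq> {j\<in>Hon. hblk E j (rnd c - 1) \<in> set (pars c)}"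
  proof
    fix j assume "j \<in> ?A \<inter> Hon"
    then obtain p where "p \<in> set (pars c)" "auth p = j" "rnd p = rnd c - 1" "honest f Byz j"
      by (auto simp: authors_at_def)
    moreover from this have "p \<in> dag E i t"
      using dag_pars[OF assms(1,2)] by blast
    ultimately show "j \<in> {j\<in>Hon. hblk E j (rnd c - 1) \<in> set (pars c)}"
      using dag_honest_block[OF assms(1)] by force
  qed
  then have "card (?A \<inter> Hon) \<le> card {j\<in>Hon. hblk E j (rnd c - 1) \<in> set (pars c)}"
    by (intro card_mono) auto
  moreover have "card ?A \<le> card (?A \<inter> Hon) + card Byz"
    using card_le_card_Int_Hon authors_at_parents_subset[OF c] by blast
  ultimately show ?thesis
    using quorum_of_parents[OF c assms(3)] card_Hon card_Byz by linarith
qed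

lemma htime_le_if_in_hist:
  assumes "honest f Byz y" and "htime E y \<rho> = Some \<tau>"
    and "honest f Byz a" and "1 \<le> r" and "hblk E a r \<in> hist (hblk E y \<rho>)"
  shows "\<exists>\<tau>'\<le>\<tau>. htime E a r = Some \<tau>'"
proof -
  have "hblk E a r \<in> dag E y \<tau>"
    using dag_hist[OF assms(1) hblk_in_dag[OF assms(1,2)]] assms(5) by blast
  then show ?thesis
    using dag_honest_block[OF assms(1)] hblk_auth_rnd[OF assms(3,4)] assms(3) by force
qed

definition revealers :: "nat \<Rightarrow> nat \<Rightarrow> nat set" where
  "revealers t r = {i. honest f Byz i \<and> (\<exists>\<tau>\<le>t. htime E i (r+4) = Some \<tau>)}"

lemma revealed_iff: "revealed f Byz E t r \<longleftrightarrow> f + 1 \<le> card (revealers t r)"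
  by (simp add: revealed_def revealers_def)

lemma finite_revealers [simp]: "finite (revealers t r)"
  by (rule finite_subset[of _ Hon]) (auto simp: revealers_def)

definition reveal_time :: "nat \<Rightarrow> nat" where
  "reveal_time r = (LEAST t. revealed f Byz E t r)"

lemma revealed_reveal_time: "revealed f Byz E (reveal_time r) r"
proof -
  have "\<forall>\<^sub>F t in sequentially. \<exists>\<tau>\<le>t. htime E j (r+4) = Some \<tau>" if j: "j \<in> Hon" for j
  proof -
    obtain \<tau> where "htime E j (r+4) = Some \<tau>"
      using htime_defined j by fastforce
    then show ?thesis
      unfolding eventually_sequentially by (intro exI[of _ \<tau>]) auto
  qed
  then have "\<forall>\<^sub>F t in sequentially. \<forall>j\<in>Hon. \<exists>\<tau>\<le>t. htime E j (r+4) = Some \<tau>"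
    by (intro eventually_ball_finite[OF finite_Hon]) auto
  then obtain t where "Hon \<subseteq> revealers t r"
    unfolding eventually_sequentially revealers_def by blast
  then have "card Hon \<le> card (revealers t r)"
    by (intro card_mono) auto
  then have "revealed f Byz E t r"
    using card_Hon_ge by (simp add: revealed_iff)
  then show ?thesis
    unfolding reveal_time_def by (rule LeastI)
qed

lemma not_revealed_before: "t < reveal_time r \<Longrightarrow> \<not> revealed f Byz E t r"
  unfolding reveal_time_def by (rule not_less_Least)

lemma reveal_time_pos: "0 < reveal_time r"
proof -
  have "revealers 0 r = {}"
    using hblk_created by (fastforce simp: revealers_def)
  then have "\<not> revealed f Byz E 0 r"
    by (simp add: revealed_iff)
  then show ?thesis
    using revealed_reveal_time[of r] by (metis gr0I)
qed

lemma revealed_antimono_round: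
  assumes "revealed f Byz E t r'" and "r \<le> r'"
  shows "revealed f Byz E t r"
proof -
  have "revealers t r' \<subseteq> revealers t r"
  proof
    fix i assume "i \<in> revealers t r'"
    then obtain \<tau> where i: "honest f Byz i" "\<tau> \<le> t" "htime E i (r'+4) = Some \<tau>"
      by (auto simp: revealers_def)
    moreover obtain \<tau>' where "\<tau>' \<le> \<tau>" "htime E i (r+4) = Some \<tau>'"
      using htime_mono[OF i(1,3), of "r+4"] assms(2) by auto
    ultimately show "i \<in> revealers t r"
      by (auto simp: revealers_def)
  qed
  then have "card (revealers t r') \<le> card (revealers t r)"
    by (intro card_mono) auto
  with assms(1) show ?thesis
    by (simp add: revealed_iff)
qed

text \<open>Only what happens up to the reveal time enters, so the core does not depend on the coin
  that chooses the leaders of round r.\<close>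
definition core :: "nat \<Rightarrow> nat set" where
  "core r = {a. honest f Byz a \<and> (\<exists>\<tau>\<le>reveal_time r. htime E a r = Some \<tau>) \<and>
     (\<forall>x \<tau>. honest f Byz x \<longrightarrow> \<tau> \<le> reveal_time r \<longrightarrow> htime E x (r+2) = Some \<tau> \<longrightarrow>
        hblk E a r \<in> hist (hblk E x (r+2)))}"

lemma core_well_referenced:
  assumes "1 \<le> r" and "a \<in> core r"
  shows "well_referenced r a"
proof -
  let ?X = "{x. honest f Byz x \<and> htime E x (r+2) \<noteq> None \<and> hblk E a r \<in> hist (hblk E x (r+2))}"
  have "revealers (reveal_time r) r \<subseteq> ?X"
  proof
    fix x assume "x \<in> revealers (reveal_time r) r"
    then obtain \<tau> where x: "honest f Byz x" "\<tau> \<le> reveal_time r" "htime E x (r+4) = Some \<tau>"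
      by (auto simp: revealers_def)
    then obtain \<tau>' where "htime E x (r+2) = Some \<tau>'" "\<tau>' \<le> \<tau>"
      using htime_mono[OF x(1,3), of "r+2"] by auto
    with x assms(2) show "x \<in> ?X"
      by (auto simp: core_def)
  qed
  then have "card (revealers (reveal_time r) r) \<le> card ?X"
    by (intro card_mono) (auto intro: finite_subset[of _ Hon])
  then show ?thesis
    using revealed_reveal_time[of r] assms by (simp add: revealed_iff well_referenced_def core_def)
qed

lemma card_parents_of_hblk:
  assumes "honest f Byz x" and "htime E x (r+1) = Some \<tau>" and "1 \<le> r"
  shows "card Hon - f \<le> card {y\<in>Hon. hblk E y r \<in> set (pars (hblk E x (r+1)))}"
  using card_honest_parents[OF assms(1) hblk_in_dag[OF assms(1,2)]] hblk_rnd[OF assms(1,2)] assms(3)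
  by simp

lemma common_core_exists:
  assumes "1 \<le> r"
  shows "\<exists>a\<in>Hon. \<forall>x \<tau>. honest f Byz x \<longrightarrow> \<tau> \<le> T \<longrightarrow> htime E x (r+2) = Some \<tau> \<longrightarrow>
    hblk E a r \<in> hist (hblk E x (r+2))"
proof -
  let ?d = "card Hon - f"
  define Y where "Y = {y\<in>Hon. \<exists>\<tau>\<le>T. htime E y (r+1) = Some \<tau>}"
  define S where "S y = {a\<in>Hon. hblk E a r \<in> hist (hblk E y (r+1))}" for y
  define P where "P x = {y\<in>Hon. hblk E y (r+1) \<in> set (pars (hblk E x (r+2)))}" for x
  have S: "S y \<subseteq> Hon \<and> ?d \<le> card (S y)" if "y \<in> Y" for y
  proof -
    from \<open>y \<in> Y\<close> obtain \<tau> where y: "honest f Byz y" "htime E y (r+1) = Some \<tau>"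
      by (auto simp: Y_def)
    have "?d \<le> card {a\<in>Hon. hblk E a r \<in> set (pars (hblk E y (r+1)))}"
      using card_parents_of_hblk[OF y assms] .
    also have "\<dots> \<le> card (S y)"
      using parent_in_hist by (intro card_mono) (auto simp: S_def)
    finally show ?thesis
      by (auto simp: S_def)
  qed
  have P: "P x \<subseteq> Y \<and> ?d \<le> card (P x)"
    if x: "honest f Byz x" "htime E x (r+2) = Some \<tau>" "\<tau> \<le> T" for x \<tau>
  proof
    show "?d \<le> card (P x)"
      using card_parents_of_hblk[of x "r+1"] x(1,2) by (simp add: P_def)
    show "P x \<subseteq> Y"
    proof
      fix y assume "y \<in> P x"
      then have "honest f Byz y" "hblk E y (r+1) \<in> hist (hblk E x (r+2))"
        using parent_in_hist by (auto simp: P_def)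
      then show "y \<in> Y"
        using htime_le_if_in_hist[OF x(1,2)] x(3) by (force simp: Y_def)
    qed
  qed
  obtain a where "a \<in> Hon" and a: "\<And>X. X \<subseteq> Y \<Longrightarrow> ?d \<le> card X \<Longrightarrow> \<exists>y\<in>X. a \<in> S y"
    using common_core[of Hon ?d f Y S] S card_Hon_ge by (force simp: Y_def)
  have "hblk E a r \<in> hist (hblk E x (r+2))"
    if x: "honest f Byz x" "htime E x (r+2) = Some \<tau>" "\<tau> \<le> T" for x \<tau>
  proof -
    obtain y where "y \<in> P x" "a \<in> S y"
      using a P[OF x] by blast
    then show ?thesis
      using hist_subset_of_parent by (fastforce simp: P_def S_def)
  qed
  with \<open>a \<in> Hon\<close> show ?thesis
    by blast
qed

lemma core_nonempty:
  assumes "1 \<le> r"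
  shows "core r \<noteq> {}"
proof -
  let ?T = "reveal_time r"
  obtain a where "a \<in> Hon" and in_hist: "\<And>x \<tau>. honest f Byz x \<Longrightarrow> \<tau> \<le> ?T \<Longrightarrow>
      htime E x (r+2) = Some \<tau> \<Longrightarrow> hblk E a r \<in> hist (hblk E x (r+2))"
    using common_core_exists[OF assms, of ?T] by blast
  have "revealers ?T r \<noteq> {}"
    using revealed_reveal_time[of r] by (auto simp: revealed_iff)
  then obtain x \<tau> where x: "honest f Byz x" "\<tau> \<le> ?T" "htime E x (r+4) = Some \<tau>"
    by (auto simp: revealers_def)
  then obtain \<tau>' where "\<tau>' \<le> ?T" "htime E x (r+2) = Some \<tau>'"
    using htime_mono[OF x(1,3), of "r+2"] by fastforce
  then have "\<exists>\<tau>''\<le>?T. htime E a r = Some \<tau>''"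
    using htime_le_if_in_hist[OF x(1) _ _ assms in_hist] x(1) \<open>a \<in> Hon\<close> by fastforce
  with \<open>a \<in> Hon\<close> in_hist have "a \<in> core r"
    by (auto simp: core_def)
  then show ?thesis
    by blast
qed

end

lemma reveal_time_eq_if_agree:
  assumes "mahi_execution f Byz E" and "mahi_execution f Byz E'"
    and agree: "agree_upto f Byz E E' (mahi_execution.reveal_time f Byz E r)"
  shows "mahi_execution.reveal_time f Byz E' r = mahi_execution.reveal_time f Byz E r"
proof -
  interpret E: mahi_execution f Byz E by fact
  interpret E': mahi_execution f Byz E' by fact
  let ?T = "E.reveal_time r"
  have revealers: "E.revealers t r = E'.revealers t r" if "t \<le> ?T" for t
    using agree that unfolding E.revealers_def E'.revealers_def agree_upto_def
    by (meson order_trans)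
  show ?thesis
    unfolding E'.reveal_time_def
  proof (rule Least_equality)
    show "revealed f Byz E' ?T r"
      using E.revealed_reveal_time[of r] revealers[of ?T] by (simp add: E.revealed_iff E'.revealed_iff)
    show "?T \<le> t" if "revealed f Byz E' t r" for t
    proof (rule ccontr)
      assume "\<not> ?T \<le> t"
      then show False
        using E.not_revealed_before[of t r] revealers[of t] that by (simp add: E.revealed_iff E'.revealed_iff)
    qed
  qed
qed

lemma core_eq_if_agree:
  assumes "mahi_execution f Byz E" and "mahi_execution f Byz E'"
    and agree: "agree_upto f Byz E E' (mahi_execution.reveal_time f Byz E r)"
  shows "mahi_execution.core f Byz E r = mahi_execution.core f Byz E' r"
proof -
  interpret E: mahi_execution f Byz E by fact
  interpret E': mahi_execution f Byz E' by fact
  let ?T = "E.reveal_time r"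
  have htime: "htime E i \<rho> = Some \<tau> \<longleftrightarrow> htime E' i \<rho> = Some \<tau>" if "honest f Byz i" "\<tau> \<le> ?T" for i \<rho> \<tau>
    using agree that by (simp add: agree_upto_def)
  have hblk: "hblk E i \<rho> = hblk E' i \<rho>"
    if "honest f Byz i" "\<tau> \<le> ?T" "htime E i \<rho> = Some \<tau>" for i \<rho> \<tau>
    using agree that by (simp add: agree_upto_def)
  have T: "E'.reveal_time r = ?T"
    using reveal_time_eq_if_agree[OF assms] .
  have "a \<in> E.core r \<longleftrightarrow> a \<in> E'.core r" for a
  proof (cases "honest f Byz a \<and> (\<exists>\<tau>\<le>?T. htime E a r = Some \<tau>)")
    case True
    then have "hblk E a r = hblk E' a r"
      using hblk by blast
    then have "(\<forall>x \<tau>. honest f Byz x \<longrightarrow> \<tau> \<le> ?T \<longrightarrow> htime E x (r+2) = Some \<tau> \<longrightarrow>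
          hblk E a r \<in> hist (hblk E x (r+2)))
      \<longleftrightarrow> (\<forall>x \<tau>. honest f Byz x \<longrightarrow> \<tau> \<le> ?T \<longrightarrow> htime E' x (r+2) = Some \<tau> \<longrightarrow>
          hblk E' a r \<in> hist (hblk E' x (r+2)))"
      using htime hblk by metis
    moreover have "(\<exists>\<tau>\<le>?T. htime E a r = Some \<tau>) \<longleftrightarrow> (\<exists>\<tau>\<le>?T. htime E' a r = Some \<tau>)"
      using htime True by blast
    ultimately show ?thesis
      by (simp only: E.core_def E'.core_def mem_Collect_eq T)
  next
    case False
    moreover have "\<not> (honest f Byz a \<and> (\<exists>\<tau>\<le>?T. htime E' a r = Some \<tau>))"
      using False htime by auto
    ultimately show ?thesis
      unfolding E.core_def E'.core_def T by blast
  qed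
  then show ?thesis
    by blast
qed

lemma agree_until_reveal_time:
  assumes "non_anticipating f Byz Adv" and "mahi_execution f Byz (Adv \<omega>)"
    and "\<forall>r'<r. \<omega> r' = \<omega>' r'"
  shows "agree_upto f Byz (Adv \<omega>) (Adv \<omega>') (mahi_execution.reveal_time f Byz (Adv \<omega>) r)"
proof -
  interpret mahi_execution f Byz "Adv \<omega>" by fact
  obtain t where t: "reveal_time r = Suc t"
    using reveal_time_pos gr0_conv_Suc by blast
  have "\<omega> r' = \<omega>' r'" if "revealed f Byz (Adv \<omega>) t r'" for r'
  proof -
    have "\<not> revealed f Byz (Adv \<omega>) t r"
      using not_revealed_before t by simp
    then have "r' < r"
      using revealed_antimono_round[OF that] by (meson not_less)
    then show ?thesis
      using assms(3) by blast
  qed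
  then show ?thesis
    using assms(1) t unfolding non_anticipating_def by metis
qed

lemma core_eq_if_coins_agree:
  assumes "\<And>\<omega>. mahi_execution f Byz (Adv \<omega>)" and "non_anticipating f Byz Adv"
    and "\<forall>r'<r. \<omega> r' = \<omega>' r'"
  shows "mahi_execution.core f Byz (Adv \<omega>) r = mahi_execution.core f Byz (Adv \<omega>') r"
  using core_eq_if_agree agree_until_reveal_time assms by blast

lemma finite_leader_lists: "finite (leader_lists f l)"
  by (rule finite_subset[of _ "{xs. set xs \<subseteq> {..<3*f+1} \<and> length xs = l}"])
     (auto simp: leader_lists_def intro: finite_lists_length_eq)

lemma leader_list_with_head:
  assumes "1 \<le> l" and "l \<le> 3*f+1" and "a < 3*f+1"
  shows "\<exists>ys\<in>leader_lists f l. ys ! 0 = a"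
proof -
  define zs where "zs = filter (\<lambda>x. x \<noteq> a) [0..<3*f+1]"
  have zs: "distinct zs" "set zs = {..<3*f+1} - {a}"
    by (auto simp: zs_def)
  then have "length zs = 3*f"
    using distinct_card[of zs] assms(3) by simp
  with zs assms show ?thesis
    by (intro bexI[of _ "a # take (l - 1) zs"])
       (auto simp: leader_lists_def dest: in_set_takeD intro: distinct_take)
qed

lemma (in mahi_execution) leader_list_in_core:
  assumes "1 \<le> l" and "l \<le> 3*f+1" and "1 \<le> r"
  shows "\<exists>ys\<in>leader_lists f l. ys ! 0 \<in> core r"
proof -
  obtain a where "a \<in> core r"
    using core_nonempty[OF assms(3)] by blast
  moreover from this have "a < 3*f+1"
    by (simp add: core_def honest_def)
  ultimately show ?thesis
    using leader_list_with_head[OF assms(1,2)] by metis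
qed

theorem theorem3:
  fixes f l :: nat and Byz :: "nat set" and Adv :: "(nat \<Rightarrow> nat list) \<Rightarrow> 'm exec"
  assumes "1 \<le> l" and "l \<le> 3 * f + 1"
    and "Byz \<subseteq> {..<3 * f + 1}" and "card Byz \<le> f"
    and "\<forall>\<omega>. admissible f Byz (Adv \<omega>)"
    and "non_anticipating f Byz Adv"
  shows "AE \<omega> in coin_space f l. \<forall>k r i.
           honest f Byz k \<and> honest f Byz i \<and> htime (Adv \<omega>) k r \<noteq> None \<longrightarrow>
           (\<exists>t. hblk (Adv \<omega>) k r \<in> delivered f l \<omega> (dag (Adv \<omega>) i t))"
proof -
  have exec: "mahi_execution f Byz (Adv \<omega>)" for \<omega>
    using assms(3-5) by (simp add: mahi_execution_def)
  interpret uniform_sequence "leader_lists f l"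
    using finite_leader_lists leader_list_with_head[OF assms(1,2), of 0] by unfold_locales auto
  define G where "G r \<omega> = {ys. ys ! 0 \<in> mahi_execution.core f Byz (Adv \<omega>) r}" for r \<omega>
  have "AE \<omega> in \<mu>. \<exists>\<^sub>F R in sequentially. \<forall>j\<in>{1..5}. \<omega> (R+j) \<in> G (R+j) \<omega>"
  proof (rule AE_frequently_good_window)
    show "G r \<omega> = G r \<omega>'" if "\<forall>i<r. \<omega> i = \<omega>' i" for r \<omega> \<omega>'
      using core_eq_if_coins_agree[OF exec assms(6) that] by (simp add: G_def)
    show "G r \<omega> \<inter> leader_lists f l \<noteq> {}" if "0 < r" for r \<omega>
      using mahi_execution.leader_list_in_core[OF exec[of \<omega>] assms(1,2), of r] that by (auto simp: G_def)
  qed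
  then show ?thesis
    unfolding coin_space_def
  proof eventually_elim
    case (elim \<omega>)
    interpret mahi_execution f Byz "Adv \<omega>"
      by (rule exec)
    from elim have "\<exists>\<^sub>F R in sequentially. \<forall>k\<in>{1..5}. well_referenced (R+k) (\<omega> (R+k) ! 0)"
      by (rule frequently_elim1) (auto simp: G_def intro: core_well_referenced)
    then show ?case
      using validity_if_windows_well_referenced[OF assms(1)] by blast
  qed
qed

end
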